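(* Let $n\ge1$ and let $p\in\mathbb{R}[x_1,\dots,x_n]$ be a nonconstant real form. The following are equivalent: (A) There is an odd integer $m\ge1$ such that $p^m$ has strictly positive coefficients. (B) There is an integer $m\ge1$ such that $p^m$ has strictly positive coefficients, and $p(x)>0$ for some point $x\in\mathbb{R}_+^n$. (C) For every real form $q\in\mathbb{R}[x_1,\dots,x_n]$ with $q(x)>0$ for all $x\in\mathbb{R}_+^n\setminus\{0\}$, there exists a positive integer $m_0$ such that $p^m q$ has strictly positive coefficients for all integers $m\ge m_0$.
   Context: A form is a homogeneous polynomial. Multi-index notation: for $w=(w_1,\dots,w_n)\in\mathbb{Z}_{\ge0}^n$, $|w|=w_1+\cdots+w_n$ and $x^w=x_1^{w_1}\cdots x_n^{w_n}$. A form $p=\sum_{|w|=d}a_wx^w$ of degree $d$ (with $a_w\in\mathbb{R}$, the sum over all $w\in\mathbb{Z}_{\ge0}^n$ with $|w|=d$) is said to have strictly positive coefficients if $a_w>0$ for every $w\in\mathbb{Z}_{\ge0}^n$ with $|w|=d$ (i.e. every monomial of degree $d$ occurs with a positive coefficient). $\mathbb{R}_+^n=\{x\in\mathbb{R}^n: x_1,\dots,x_n\ge0\}$ is the closed positive orthant. *)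

theory Defs
  imports "HOL-Analysis.Analysis" "HOL-Library.Poly_Mapping"
begin

text \<open>Real polynomials in the variables indexed by the finite type 'n (so n = CARD('n) \<ge> 1),
  represented as finitely supported coefficient functions on multi-indices
  w :: 'n \<Rightarrow>0 nat (the monomial x^w). Ring operations (product, power) are the
  library's convolution structure on poly_mapping.\<close>

type_synonym 'n rpoly = "('n \<Rightarrow>\<^sub>0 nat) \<Rightarrow>\<^sub>0 real"

definition mdeg :: "('n::finite \<Rightarrow>\<^sub>0 nat) \<Rightarrow> nat" where
  "mdeg w = (\<Sum>i\<in>UNIV. Poly_Mapping.lookup w i)"

definition peval :: "'n::finite rpoly \<Rightarrow> ('n \<Rightarrow> real) \<Rightarrow> real" where
  "peval p x = (\<Sum>w\<in>Poly_Mapping.keys p. Poly_Mapping.lookup p w * (\<Prod>i\<in>UNIV. x i ^ Poly_Mapping.lookup w i))"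

definition is_form :: "'n::finite rpoly \<Rightarrow> nat \<Rightarrow> bool" where
  "is_form p d \<longleftrightarrow> (\<forall>w\<in>Poly_Mapping.keys p. mdeg w = d)"

definition strictly_pos_coeffs :: "'n::finite rpoly \<Rightarrow> bool" where
  "strictly_pos_coeffs p \<longleftrightarrow>
     (\<exists>d. is_form p d \<and> (\<forall>w. mdeg w = d \<longrightarrow> Poly_Mapping.lookup p w > 0))"

definition orthant :: "('n::finite \<Rightarrow> real) set" where
  "orthant = {x. \<forall>i. x i \<ge> 0}"

end

theory Submission
  imports Defs
begin

text \<open>If $p^m$ has positive coefficients then $p^m > 0$ on the orthant minus the origin; for odd $m$
  so is $p$, and if $p > 0$ at one point of the orthant, a sign change of $p$ along a segment would
  produce a zero of $p^m$. Conversely, suppose $p > 0$ there and $P = p^m$ has positive coefficients.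
  For any $f > 0$ on the orthant, Polya's theorem makes $(x_1 + \dots + x_n)^k f$ have positive
  coefficients for large $k$. Writing $P = c\,(x_1 + \dots + x_n)^D + R$ with $R$ having nonnegative
  coefficients, the binomial expansion of $P^N f$ then consists of terms with nonnegative coefficients,
  one with positive coefficients, and boundedly many terms that for large $N$ are dominated by a
  positive one. Applied to $f = p^r q$ for all residues $r < m$ this gives (C), and $q = 1$ gives (A).\<close>

abbreviation lookup :: "('a \<Rightarrow>\<^sub>0 'b::zero) \<Rightarrow> 'a \<Rightarrow> 'b" where
  "lookup \<equiv> Poly_Mapping.lookup"

abbreviation keys :: "('a \<Rightarrow>\<^sub>0 'b::zero) \<Rightarrow> 'a set" where
  "keys \<equiv> Poly_Mapping.keys"

abbreviation const :: "real \<Rightarrow> 'n rpoly" where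
  "const c \<equiv> Poly_Mapping.single 0 c"

lemma lookup_mult_sum:
  fixes f g :: "('a::monoid_add) \<Rightarrow>\<^sub>0 'b::semiring_0"
  assumes "finite A" "keys f \<subseteq> A" "finite B" "keys g \<subseteq> B"
  shows "lookup (f * g) k = (\<Sum>a\<in>A. \<Sum>b\<in>B. if k = a + b then lookup f a * lookup g b else 0)"
proof -
  have inner: "Sum_any (\<lambda>q. lookup g q when k = l + q) = (\<Sum>b\<in>B. if k = l + b then lookup g b else 0)" for l
    by (subst Sum_any.expand_superset[OF assms(3)]) (use assms(4) in \<open>auto simp: when_def in_keys_iff\<close>)
  have "lookup (f * g) k = Sum_any (\<lambda>l. lookup f l * (\<Sum>b\<in>B. if k = l + b then lookup g b else 0))"
    by (simp add: lookup_mult inner)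
  also have "\<dots> = (\<Sum>a\<in>A. lookup f a * (\<Sum>b\<in>B. if k = a + b then lookup g b else 0))"
    by (rule Sum_any.expand_superset[OF assms(1)]) (use assms(2) in \<open>auto simp: in_keys_iff dest!: mult_not_zero\<close>)
  also have "\<dots> = (\<Sum>a\<in>A. \<Sum>b\<in>B. if k = a + b then lookup f a * lookup g b else 0)"
    by (simp add: sum_distrib_left if_distrib cong: if_cong)
  finally show ?thesis .
qed

definition monom_dvd :: "('n \<Rightarrow>\<^sub>0 nat) \<Rightarrow> ('n \<Rightarrow>\<^sub>0 nat) \<Rightarrow> bool" where
  "monom_dvd a v \<longleftrightarrow> (\<forall>i. lookup a i \<le> lookup v i)"

lemma add_eq_iff_monom_dvd: "v = a + b \<longleftrightarrow> monom_dvd a v \<and> b = v - a"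
proof
  assume "v = a + b"
  then show "monom_dvd a v \<and> b = v - a"
    by (auto simp: monom_dvd_def poly_mapping_eq_iff fun_eq_iff lookup_add lookup_minus)
next
  assume "monom_dvd a v \<and> b = v - a"
  then show "v = a + b"
    by (auto simp: monom_dvd_def poly_mapping_eq_iff fun_eq_iff lookup_add lookup_minus)
qed

lemma lookup_single_mult:
  fixes g :: "('n \<Rightarrow>\<^sub>0 nat) \<Rightarrow>\<^sub>0 'b::semiring_0"
  shows "lookup (Poly_Mapping.single a c * g) v = (if monom_dvd a v then c * lookup g (v - a) else 0)"
proof -
  have "lookup (Poly_Mapping.single a c * g) v =
     (\<Sum>a'\<in>{a}. \<Sum>b\<in>keys g. if v = a' + b then lookup (Poly_Mapping.single a c) a' * lookup g b else 0)"
    by (rule lookup_mult_sum) auto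
  also have "\<dots> = (\<Sum>b\<in>keys g. if b = v - a \<and> monom_dvd a v then c * lookup g b else 0)"
    by (auto simp: add_eq_iff_monom_dvd intro!: sum.cong)
  also have "\<dots> = (if monom_dvd a v then c * lookup g (v - a) else 0)"
    by (cases "monom_dvd a v") (auto simp: sum.delta' in_keys_iff)
  finally show ?thesis .
qed

lemma lookup_const_mult: "lookup (Poly_Mapping.single 0 c * g) v = c * lookup (g :: ('n \<Rightarrow>\<^sub>0 nat) \<Rightarrow>\<^sub>0 'b::semiring_0) v"
  by (simp add: lookup_single_mult monom_dvd_def)

lemma mdeg_add: "mdeg (a + b) = mdeg a + mdeg (b::'n::finite \<Rightarrow>\<^sub>0 nat)"
  by (simp add: mdeg_def lookup_add sum.distrib)

lemma mdeg_zero [simp]: "mdeg (0::'n::finite \<Rightarrow>\<^sub>0 nat) = 0"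
  by (simp add: mdeg_def)

lemma mdeg_single [simp]: "mdeg (Poly_Mapping.single i k :: 'n::finite \<Rightarrow>\<^sub>0 nat) = k"
  by (simp add: mdeg_def lookup_single when_def)

lemma mdeg_eq_0_iff: "mdeg (w::'n::finite \<Rightarrow>\<^sub>0 nat) = 0 \<longleftrightarrow> w = 0"
  unfolding mdeg_def by (auto simp: poly_mapping_eq_iff fun_eq_iff)

lemma mdeg_diff: "monom_dvd u v \<Longrightarrow> mdeg (v - u) = mdeg v - mdeg (u::'n::finite \<Rightarrow>\<^sub>0 nat)"
  using add_eq_iff_monom_dvd[of v u "v - u"] mdeg_add[of u "v - u"] by simp

lemma is_form_iff: "is_form f a \<longleftrightarrow> (\<forall>w. mdeg w \<noteq> a \<longrightarrow> lookup f w = 0)"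
  unfolding is_form_def by (auto simp: in_keys_iff)

lemma is_form_lookup: "is_form f a \<Longrightarrow> mdeg w \<noteq> a \<Longrightarrow> lookup f w = 0"
  by (simp add: is_form_iff)

lemma is_form_mult:
  fixes f g :: "'n::finite rpoly"
  shows "is_form f a \<Longrightarrow> is_form g b \<Longrightarrow> is_form (f * g) (a + b)"
  using keys_mult[of f g] unfolding is_form_def by (force simp: mdeg_add)

lemma is_form_one: "is_form (1::'n::finite rpoly) 0"
  by (simp add: is_form_def)

lemma is_form_power: "is_form (f :: 'n::finite rpoly) a \<Longrightarrow> is_form (f ^ m) (a * m)"
  by (induction m) (auto simp: is_form_one is_form_mult add.commute)

lemma is_form_add: "is_form f a \<Longrightarrow> is_form g a \<Longrightarrow> is_form (f + g) a"
  using keys_add[of f g] unfolding is_form_def by blast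

lemma is_form_sum: "(\<And>i. i \<in> I \<Longrightarrow> is_form (f i) a) \<Longrightarrow> is_form (sum f I) a"
  using keys_sum[of f I] unfolding is_form_def by blast

lemma is_form_const_mult: "is_form (g :: 'n::finite rpoly) a \<Longrightarrow> is_form (const c * g) a"
  using is_form_mult[of "const c" 0 g a] by (simp add: is_form_def)

definition monom_eval :: "('n::finite \<Rightarrow>\<^sub>0 nat) \<Rightarrow> ('n \<Rightarrow> real) \<Rightarrow> real" where
  "monom_eval w x = (\<Prod>i\<in>UNIV. x i ^ lookup w i)"

lemma monom_eval_add: "monom_eval (a + b) x = monom_eval a x * monom_eval b x"
  by (simp add: monom_eval_def lookup_add power_add prod.distrib)

lemma monom_eval_single: "monom_eval (Poly_Mapping.single i a) x = x i ^ a"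
proof -
  have "\<And>j. x j ^ lookup (Poly_Mapping.single i a) j = (if i = j then x i ^ a else 1)"
    by (simp add: lookup_single when_def)
  then show ?thesis unfolding monom_eval_def by (simp add: prod.delta)
qed

lemma monom_eval_nonneg: "x \<in> orthant \<Longrightarrow> monom_eval w x \<ge> 0"
  unfolding monom_eval_def orthant_def by (auto intro!: prod_nonneg)

lemma peval_eq_sum: "peval p x = (\<Sum>w\<in>keys p. lookup p w * monom_eval w x)"
  by (simp add: peval_def monom_eval_def)

lemma peval_eq_sum_superset:
  assumes "finite A" "keys p \<subseteq> A"
  shows "peval p x = (\<Sum>w\<in>A. lookup p w * monom_eval w x)"
  unfolding peval_def monom_eval_def
  by (rule sum.mono_neutral_left[OF assms]) (auto simp: in_keys_iff)

lemma peval_mult: "peval (f * g) x = peval f x * peval (g :: 'n::finite rpoly) x"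
proof -
  define A where "A = keys f"
  define B where "B = keys g"
  define C where "C = (\<lambda>(a,b). a + b) ` (A \<times> B)"
  have fin: "finite A" "finite B" "finite C" unfolding A_def B_def C_def by auto
  have "peval (f * g) x = (\<Sum>k\<in>C. lookup (f * g) k * monom_eval k x)"
    using keys_mult[of f g] by (intro peval_eq_sum_superset) (auto simp: fin C_def A_def B_def)
  also have "\<dots> = (\<Sum>k\<in>C. \<Sum>a\<in>A. \<Sum>b\<in>B. if k = a + b then lookup f a * lookup g b * monom_eval k x else 0)"
  proof (intro sum.cong refl)
    fix k
    have "\<And>P c m. (if P then c else 0) * m = (if P then c * m else (0::real))" by simp
    then show "lookup (f * g) k * monom_eval k x
      = (\<Sum>a\<in>A. \<Sum>b\<in>B. if k = a + b then lookup f a * lookup g b * monom_eval k x else 0)"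
      by (simp add: lookup_mult_sum[OF fin(1) _ fin(2)] A_def B_def sum_distrib_right)
  qed
  also have "\<dots> = (\<Sum>a\<in>A. \<Sum>b\<in>B. \<Sum>k\<in>C. if k = a + b then lookup f a * lookup g b * monom_eval k x else 0)"
    by (subst sum.swap) (subst (2) sum.swap, rule refl)
  also have "\<dots> = (\<Sum>a\<in>A. \<Sum>b\<in>B. lookup f a * lookup g b * monom_eval (a + b) x)"
    using fin(3) by (intro sum.cong refl) (auto simp: sum.delta' C_def)
  also have "\<dots> = peval f x * peval g x"
    by (simp add: peval_eq_sum A_def B_def sum_product monom_eval_add mult_ac)
  finally show ?thesis .
qed

lemma peval_power: "peval (f ^ m) x = peval (f :: 'n::finite rpoly) x ^ m"
  by (induction m) (simp_all add: peval_mult, simp add: peval_def)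

lemma peval_at_zero:
  assumes "is_form p d" "d \<ge> 1" shows "peval p (\<lambda>_. 0) = 0"
proof -
  have "monom_eval w (\<lambda>_. 0) = 0" if "w \<in> keys p" for w
  proof -
    have "mdeg w = d" using assms(1) that by (simp add: is_form_def)
    then have "w \<noteq> 0" using assms(2) by auto
    then obtain i where "lookup w i \<noteq> 0" by (auto simp: poly_mapping_eq_iff fun_eq_iff)
    then show ?thesis unfolding monom_eval_def by (intro prod_zero) auto
  qed
  then show ?thesis by (simp add: peval_eq_sum)
qed

definition orthant_pos :: "'n::finite rpoly \<Rightarrow> bool" where
  "orthant_pos f \<longleftrightarrow> (\<forall>x\<in>orthant - {\<lambda>_. 0}. peval f x > 0)"

definition pos_form :: "'n::finite rpoly \<Rightarrow> nat \<Rightarrow> bool" where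
  "pos_form f a \<longleftrightarrow> is_form f a \<and> (\<forall>w. mdeg w = a \<longrightarrow> lookup f w > 0)"

definition nonneg_form :: "'n::finite rpoly \<Rightarrow> nat \<Rightarrow> bool" where
  "nonneg_form f a \<longleftrightarrow> is_form f a \<and> (\<forall>w. lookup f w \<ge> 0)"

lemma nonneg_form_imp_is_form: "nonneg_form f a \<Longrightarrow> is_form f a"
  by (simp add: nonneg_form_def)

lemma strictly_pos_coeffs_iff: "strictly_pos_coeffs f \<longleftrightarrow> (\<exists>a. pos_form f a)"
  by (simp add: strictly_pos_coeffs_def pos_form_def)

lemma pos_form_imp_nonneg_form: "pos_form f a \<Longrightarrow> nonneg_form f a"
  unfolding pos_form_def nonneg_form_def by (metis is_form_lookup less_eq_real_def order_refl)

lemma in_keys_pos_form: "pos_form f a \<Longrightarrow> w \<in> keys f \<longleftrightarrow> mdeg w = a"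
  unfolding pos_form_def is_form_def using in_keys_iff[of w f] by force

lemma pos_form_power_degree:
  assumes "is_form p d" "pos_form (p ^ m) a" shows "a = d * m"
proof -
  have "Poly_Mapping.single undefined a \<in> keys (p ^ m)"
    using in_keys_pos_form[OF assms(2)] by simp
  with is_form_power[OF assms(1), of m] show ?thesis unfolding is_form_def by auto
qed

lemma nonneg_form_mult: "nonneg_form f a \<Longrightarrow> nonneg_form g b \<Longrightarrow> nonneg_form (f * g) (a + b)"
  unfolding nonneg_form_def using is_form_mult
  by (auto simp: lookup_mult_sum[of "keys f" _ "keys g"] intro!: sum_nonneg)

lemma pos_form_add: "pos_form f a \<Longrightarrow> nonneg_form g a \<Longrightarrow> pos_form (f + g) a"
  unfolding pos_form_def nonneg_form_def using is_form_add by (auto simp: lookup_add add_pos_nonneg)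

lemma nonneg_form_sum: "(\<And>i. i \<in> I \<Longrightarrow> nonneg_form (f i) a) \<Longrightarrow> nonneg_form (sum f I) a"
  unfolding nonneg_form_def using is_form_sum[of I f a]
  by (auto simp: lookup_sum intro!: sum_nonneg)

lemma pos_form_sum:
  assumes "finite I" "j \<in> I" "pos_form (f j) a" "\<And>i. i \<in> I \<Longrightarrow> i \<noteq> j \<Longrightarrow> nonneg_form (f i) a"
  shows "pos_form (sum f I) a"
proof -
  have "sum f I = f j + sum f (I - {j})" using assms by (simp add: sum.remove)
  moreover have "nonneg_form (sum f (I - {j})) a" using assms by (intro nonneg_form_sum) auto
  ultimately show ?thesis using pos_form_add assms(3) by simp
qed

lemma nonneg_form_const_mult: "c \<ge> 0 \<Longrightarrow> nonneg_form g a \<Longrightarrow> nonneg_form (const c * g) a"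
  unfolding nonneg_form_def using is_form_const_mult by (auto simp: lookup_const_mult)

lemma pos_form_const_mult: "c > 0 \<Longrightarrow> pos_form g a \<Longrightarrow> pos_form (const c * g) a"
  unfolding pos_form_def using is_form_const_mult by (auto simp: lookup_const_mult)

lemma nonneg_form_power: "nonneg_form f a \<Longrightarrow> nonneg_form (f ^ m) (a * m)"
proof (induction m)
  case 0
  show ?case by (simp add: nonneg_form_def is_form_one lookup_one when_def)
next
  case (Suc m)
  then show ?case using nonneg_form_mult[of f a "f ^ m" "a * m"] by simp
qed

lemma pos_form_coeff_lower_bound:
  assumes "pos_form g a" shows "\<exists>\<beta>>0. \<forall>v. mdeg v = a \<longrightarrow> lookup g v \<ge> \<beta>"
proof -
  have ne: "Poly_Mapping.single undefined a \<in> keys g" using in_keys_pos_form[OF assms] by simp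
  define \<beta> where "\<beta> = Min (lookup g ` keys g)"
  have "\<beta> \<in> lookup g ` keys g" unfolding \<beta>_def using ne by (intro Min_in) auto
  then have "\<beta> > 0" using assms in_keys_pos_form[OF assms] unfolding pos_form_def by auto
  moreover have "lookup g v \<ge> \<beta>" if "mdeg v = a" for v
    unfolding \<beta>_def using that in_keys_pos_form[OF assms] by (intro Min_le) auto
  ultimately show ?thesis by blast
qed

lemma peval_pos_form_pos:
  assumes f: "pos_form f a" and x: "x \<in> orthant" "x \<noteq> (\<lambda>_. 0)"
  shows "peval f x > 0"
proof -
  obtain i where "x i \<noteq> 0" using x(2) by auto
  then have xi: "x i > 0" using x(1) unfolding orthant_def by (simp add: less_le)
  have "lookup f w \<ge> 0" for w using f pos_form_imp_nonneg_form nonneg_form_def by blast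
  then have "lookup f w * monom_eval w x \<ge> 0" for w by (simp add: monom_eval_nonneg[OF x(1)])
  moreover have "lookup f (Poly_Mapping.single i a) * monom_eval (Poly_Mapping.single i a) x > 0"
    using f xi unfolding pos_form_def by (simp add: monom_eval_single)
  moreover have "Poly_Mapping.single i a \<in> keys f" using in_keys_pos_form[OF f] by simp
  ultimately show ?thesis unfolding peval_eq_sum by (intro sum_pos2[OF finite_keys]) auto
qed

section \<open>Polya's theorem\<close>

definition var_exp :: "'n \<Rightarrow> ('n \<Rightarrow>\<^sub>0 nat)" where
  "var_exp i = Poly_Mapping.single i 1"

definition sum_vars :: "'n::finite rpoly" where
  "sum_vars = (\<Sum>i\<in>UNIV. Poly_Mapping.single (var_exp i) 1)"

lemma lookup_var_exp: "lookup (var_exp i) j = (if i = j then 1 else 0)"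
  by (simp add: var_exp_def lookup_single when_def)

lemma lookup_minus_var_exp: "lookup (v - var_exp i) j = (if j = i then lookup v i - 1 else lookup v j)"
  by (simp add: lookup_minus lookup_var_exp)

lemma monom_dvd_var_exp_iff: "monom_dvd (var_exp i) v \<longleftrightarrow> 0 < lookup v i"
  unfolding monom_dvd_def by (auto simp: lookup_var_exp)

lemma mdeg_minus_var_exp: "0 < lookup v i \<Longrightarrow> mdeg (v - var_exp i) = mdeg v - 1"
  using mdeg_diff[of "var_exp i" v] monom_dvd_var_exp_iff[of i v] by (simp add: var_exp_def)

lemma lookup_sum_vars_mult:
  "lookup (sum_vars * g) v = (\<Sum>i\<in>UNIV. if 0 < lookup v i then lookup g (v - var_exp i) else 0)"
  unfolding sum_vars_def sum_distrib_right lookup_sum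
  by (intro sum.cong refl) (simp add: lookup_single_mult monom_dvd_var_exp_iff)

lemma nonneg_form_sum_vars: "nonneg_form (sum_vars :: 'n::finite rpoly) 1"
proof -
  have "is_form (sum_vars :: 'n rpoly) 1"
    unfolding sum_vars_def by (rule is_form_sum) (simp add: is_form_def var_exp_def)
  then show ?thesis
    by (auto simp: nonneg_form_def sum_vars_def lookup_sum lookup_single when_def intro!: sum_nonneg)
qed

lemma nonneg_form_sum_vars_power: "nonneg_form (sum_vars ^ D :: 'n::finite rpoly) D"
  using nonneg_form_power[OF nonneg_form_sum_vars, of D] by simp

definition falling :: "nat \<Rightarrow> nat \<Rightarrow> real" where
  "falling a b = (\<Prod>j<b. real a - real j)"

lemma falling_Suc_Suc: "falling (Suc a) (Suc b) = real (Suc a) * falling a b"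
  unfolding falling_def by (subst prod.lessThan_Suc_shift) simp

lemma falling_self: "falling a a = fact a"
  by (induction a) (simp_all add: falling_Suc_Suc falling_def[of _ 0])

lemma falling_eq_0: "a < b \<Longrightarrow> falling a b = 0"
  unfolding falling_def by (rule prod_zero) auto

lemma falling_Suc_left: "real (Suc a) * falling a b = (real (Suc a) - real b) * falling (Suc a) b"
  using falling_Suc_Suc[of a b] by (simp add: falling_def mult_ac)

lemma prod_fact_minus_var_exp:
  fixes v :: "'n::finite \<Rightarrow>\<^sub>0 nat"
  assumes "0 < lookup v i"
  shows "(\<Prod>j\<in>UNIV. fact (lookup v j) :: real) = real (lookup v i) * (\<Prod>j\<in>UNIV. fact (lookup (v - var_exp i) j))"
proof -
  have "(\<Prod>j\<in>UNIV - {i}. fact (lookup (v - var_exp i) j) :: real) = (\<Prod>j\<in>UNIV - {i}. fact (lookup v j))"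
    by (rule prod.cong) (auto simp: lookup_minus_var_exp)
  moreover have "(fact (lookup v i) :: real) = real (lookup v i) * fact (lookup v i - 1)"
    using assms by (metis fact_reduce)
  moreover have "lookup (v - var_exp i) i = lookup v i - 1" by (simp add: lookup_minus_var_exp)
  ultimately show ?thesis
    using prod.remove[of UNIV i "\<lambda>j. fact (lookup v j) :: real"]
      prod.remove[of UNIV i "\<lambda>j. fact (lookup (v - var_exp i) j) :: real"] by simp
qed

lemma prod_falling_minus_var_exp:
  fixes u v :: "'n::finite \<Rightarrow>\<^sub>0 nat"
  shows "(if 0 < lookup v i then real (lookup v i) * (\<Prod>j\<in>UNIV. falling (lookup (v - var_exp i) j) (lookup u j)) else 0)
     = (real (lookup v i) - real (lookup u i)) * (\<Prod>j\<in>UNIV. falling (lookup v j) (lookup u j))"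
proof (cases "0 < lookup v i")
  case True
  then obtain a where a: "lookup v i = Suc a" by (metis Suc_pred)
  have "(\<Prod>j\<in>UNIV - {i}. falling (lookup (v - var_exp i) j) (lookup u j))
      = (\<Prod>j\<in>UNIV - {i}. falling (lookup v j) (lookup u j))"
    by (rule prod.cong) (auto simp: lookup_minus_var_exp)
  moreover have "lookup (v - var_exp i) i = a" by (simp add: lookup_minus_var_exp a)
  ultimately show ?thesis using True falling_Suc_left[of a "lookup u i"]
    using prod.remove[of UNIV i "\<lambda>j. falling (lookup v j) (lookup u j)"]
      prod.remove[of UNIV i "\<lambda>j. falling (lookup (v - var_exp i) j) (lookup u j)"]
    by (simp add: a mult_ac)
next
  case False
  then have "lookup u i = 0 \<or> falling (lookup v i) (lookup u i) = 0"
    by (auto intro: falling_eq_0)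
  then have "lookup u i = 0 \<or> (\<Prod>j\<in>UNIV. falling (lookup v j) (lookup u j)) = 0"
    by (auto intro: prod_zero)
  then show ?thesis using False by auto
qed

definition falling_eval :: "'n::finite rpoly \<Rightarrow> ('n \<Rightarrow>\<^sub>0 nat) \<Rightarrow> real" where
  "falling_eval f v = (\<Sum>u\<in>keys f. lookup f u * (\<Prod>i\<in>UNIV. falling (lookup v i) (lookup u i)))"

lemma prod_falling_same_mdeg:
  fixes u v :: "'n::finite \<Rightarrow>\<^sub>0 nat"
  assumes "mdeg u = mdeg v"
  shows "(\<Prod>i\<in>UNIV. falling (lookup v i) (lookup u i)) = (if u = v then (\<Prod>i\<in>UNIV. fact (lookup v i)) else 0)"
proof (cases "u = v")
  case True
  then show ?thesis by (simp add: falling_self)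
next
  case False
  have "\<exists>i. lookup v i < lookup u i"
  proof (rule ccontr)
    assume "\<not> ?thesis"
    then have le: "monom_dvd u v" unfolding monom_dvd_def by (simp add: not_less)
    then have "v - u = 0" using mdeg_diff[OF le] assms by (simp add: mdeg_eq_0_iff)
    then show False using add_eq_iff_monom_dvd[of v u 0] le False by simp
  qed
  then have "(\<Prod>i\<in>UNIV. falling (lookup v i) (lookup u i)) = 0"
    by (auto intro: prod_zero falling_eq_0)
  then show ?thesis using False by simp
qed

lemma falling_eval_recurrence:
  assumes f: "is_form f e" and v: "mdeg v = Suc N + e"
  shows "(\<Sum>i\<in>UNIV. if 0 < lookup v i then real (lookup v i) * falling_eval f (v - var_exp i) else 0)
    = real (Suc N) * falling_eval f v"
proof -
  let ?P = "\<lambda>v u. \<Prod>j\<in>UNIV. falling (lookup v j) (lookup u j)"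
  have "(\<Sum>i\<in>UNIV. if 0 < lookup v i then real (lookup v i) * falling_eval f (v - var_exp i) else 0)
    = (\<Sum>i\<in>UNIV. \<Sum>u\<in>keys f. lookup f u *
         (if 0 < lookup v i then real (lookup v i) * ?P (v - var_exp i) u else 0))"
    by (intro sum.cong refl, cases "0 < lookup v i") (simp_all add: falling_eval_def sum_distrib_left mult_ac)
  also have "\<dots> = (\<Sum>u\<in>keys f. lookup f u * ((\<Sum>i\<in>UNIV. real (lookup v i) - real (lookup u i)) * ?P v u))"
    by (subst sum.swap) (simp add: prod_falling_minus_var_exp sum_distrib_left sum_distrib_right)
  also have "\<dots> = (\<Sum>u\<in>keys f. lookup f u * (real (Suc N) * ?P v u))"
  proof (intro sum.cong refl arg_cong[where f = "\<lambda>x. _ * (x * _)"])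
    fix u assume "u \<in> keys f"
    then have "mdeg u = e" using f unfolding is_form_def by auto
    then show "(\<Sum>i\<in>UNIV. real (lookup v i) - real (lookup u i)) = real (Suc N)"
      using v unfolding mdeg_def by (simp add: sum_subtractf flip: of_nat_sum)
  qed
  also have "\<dots> = real (Suc N) * falling_eval f v"
    by (simp add: falling_eval_def sum_distrib_left mult_ac)
  finally show ?thesis .
qed

lemma lookup_sum_vars_power_mult:
  assumes f: "is_form f e"
  shows "mdeg v = N + e \<Longrightarrow>
    lookup (sum_vars ^ N * f) v * (\<Prod>i\<in>UNIV. fact (lookup v i)) = fact N * falling_eval f v"
proof (induction N arbitrary: v)
  case 0
  have "falling_eval f v = (\<Sum>u\<in>keys f. lookup f u * (if u = v then (\<Prod>i\<in>UNIV. fact (lookup v i)) else 0))"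
    unfolding falling_eval_def
    by (intro sum.cong refl, subst prod_falling_same_mdeg) (use f 0 in \<open>auto simp: is_form_def\<close>)
  also have "\<dots> = lookup f v * (\<Prod>i\<in>UNIV. fact (lookup v i))"
    by (simp add: if_distrib sum.delta' in_keys_iff cong: if_cong)
  finally show ?case by simp
next
  case (Suc N)
  let ?c = "\<lambda>i. 0 < lookup v i"
  have "lookup (sum_vars ^ Suc N * f) v * (\<Prod>j\<in>UNIV. fact (lookup v j))
     = (\<Sum>i\<in>UNIV. if ?c i then real (lookup v i) *
          (lookup (sum_vars ^ N * f) (v - var_exp i) * (\<Prod>j\<in>UNIV. fact (lookup (v - var_exp i) j))) else 0)"
    unfolding power_Suc mult.assoc lookup_sum_vars_mult sum_distrib_right
    by (intro sum.cong refl) (simp add: prod_fact_minus_var_exp mult_ac)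
  also have "\<dots> = (\<Sum>i\<in>UNIV. if ?c i then real (lookup v i) * (fact N * falling_eval f (v - var_exp i)) else 0)"
    using Suc.IH Suc.prems mdeg_minus_var_exp[of v] by (intro sum.cong refl) auto
  also have "\<dots> = fact N * (\<Sum>i\<in>UNIV. if ?c i then real (lookup v i) * falling_eval f (v - var_exp i) else 0)"
    by (simp add: sum_distrib_left if_distrib mult_ac cong: if_cong)
  also have "\<dots> = fact (Suc N) * falling_eval f v"
    using falling_eval_recurrence[OF f Suc.prems] by simp
  finally show ?case .
qed

definition shifted_eval :: "'n::finite rpoly \<Rightarrow> real \<Rightarrow> ('n \<Rightarrow> real) \<Rightarrow> real" where
  "shifted_eval f t z = (\<Sum>u\<in>keys f. lookup f u * (\<Prod>i\<in>UNIV. \<Prod>j<lookup u i. z i - real j * t))"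

lemma shifted_eval_0: "shifted_eval f 0 z = peval f z"
  by (simp add: shifted_eval_def peval_def)

lemma falling_eval_eq_shifted_eval:
  assumes f: "is_form f e" and v: "mdeg v = M" and M: "M > 0"
  shows "falling_eval f v = real M ^ e * shifted_eval f (1 / real M) (\<lambda>i. real (lookup v i) / real M)"
proof -
  have "(\<Prod>i\<in>UNIV. falling (lookup v i) (lookup u i))
      = real M ^ e * (\<Prod>i\<in>UNIV. \<Prod>j<lookup u i. real (lookup v i) / real M - real j * (1 / real M))"
    if u: "u \<in> keys f" for u
  proof -
    have "\<And>i j. real (lookup v i) - real j = real M * (real (lookup v i) / real M - real j * (1 / real M))"
      using M by (simp add: field_simps)
    then have "(\<Prod>i\<in>UNIV. falling (lookup v i) (lookup u i))
      = (\<Prod>i\<in>UNIV. real M ^ lookup u i * (\<Prod>j<lookup u i. real (lookup v i) / real M - real j * (1 / real M)))"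
      unfolding falling_def by (simp add: prod.distrib)
    also have "\<dots> = (\<Prod>i\<in>UNIV. real M ^ lookup u i) *
        (\<Prod>i\<in>UNIV. \<Prod>j<lookup u i. real (lookup v i) / real M - real j * (1 / real M))"
      by (rule prod.distrib)
    also have "(\<Prod>i\<in>UNIV. real M ^ lookup u i) = real M ^ e"
      using f u unfolding is_form_def mdeg_def by (metis power_sum)
    finally show ?thesis .
  qed
  then show ?thesis unfolding falling_eval_def shifted_eval_def by (simp add: sum_distrib_left mult_ac)
qed

lemma compact_std_simplex_cart:
  "compact {v :: real ^ 'n. (\<forall>i. 0 \<le> v $ i) \<and> (\<Sum>i\<in>UNIV. v $ i) = 1}" (is "compact ?S")
proof (rule compact_eq_bounded_closed[THEN iffD2], rule conjI)
  show "bounded ?S"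
  proof (rule bounded_iff[THEN iffD2], intro exI ballI)
    fix v assume v: "v \<in> ?S"
    have "norm v \<le> (\<Sum>i\<in>UNIV. \<bar>v $ i\<bar>)" by (rule norm_le_l1_cart)
    also have "\<dots> = 1" using v by simp
    finally show "norm v \<le> 1" .
  qed
  show "closed ?S"
    by (intro closed_Collect_conj closed_Collect_all closed_Collect_le closed_Collect_eq continuous_intros)
qed

lemma pos_near_zero_on_compact:
  fixes F :: "real \<times> 'a::topological_space \<Rightarrow> real"
  assumes "compact K" "continuous_on UNIV F" "\<And>z. z \<in> K \<Longrightarrow> F (0, z) > 0"
  shows "\<exists>t0>0. \<forall>t z. \<bar>t\<bar> < t0 \<longrightarrow> z \<in> K \<longrightarrow> F (t, z) > 0"
proof -
  have "open {p. F p > 0}"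
    using assms(2) by (intro open_Collect_less) (auto intro: continuous_intros)
  then obtain X0 where X0: "0 \<in> X0" "open X0" "X0 \<times> K \<subseteq> {p. F p > 0}"
    using Elementary_Topology.tube_lemma[OF assms(1), of "{p. F p > 0}" 0] assms(3) by auto
  then obtain t0 where t0: "t0 > 0" "ball 0 t0 \<subseteq> X0" using openE by blast
  have "F (t, z) > 0" if "\<bar>t\<bar> < t0" "z \<in> K" for t z
  proof -
    have "t \<in> X0" using t0(2) that(1) by (auto simp: dist_real_def)
    then show ?thesis using X0(3) that(2) by auto
  qed
  then show ?thesis using t0(1) by blast
qed

lemma shifted_eval_pos_near_0:
  fixes f :: "'n::finite rpoly"
  assumes "orthant_pos f"
  shows "\<exists>t0>0. \<forall>t z. \<bar>t\<bar> < t0 \<longrightarrow> (\<forall>i. 0 \<le> z i) \<longrightarrow> (\<Sum>i\<in>UNIV. z i) = 1 \<longrightarrow> shifted_eval f t z > 0"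
proof -
  define K where "K = {v :: real ^ 'n. (\<forall>i. 0 \<le> v $ i) \<and> (\<Sum>i\<in>UNIV. v $ i) = 1}"
  have "\<exists>t0>0. \<forall>t v. \<bar>t\<bar> < t0 \<longrightarrow> v \<in> K \<longrightarrow> shifted_eval f (fst (t, v)) (\<lambda>i. snd (t, v) $ i) > 0"
  proof (rule pos_near_zero_on_compact)
    show "compact K" unfolding K_def by (rule compact_std_simplex_cart)
    show "continuous_on UNIV (\<lambda>p. shifted_eval f (fst p) (\<lambda>i. snd p $ i))"
      unfolding shifted_eval_def by (intro continuous_intros)
    fix v assume "v \<in> K"
    then have "(\<lambda>i. v $ i) \<in> orthant - {\<lambda>_. 0}" by (auto simp: K_def orthant_def)
    then show "shifted_eval f (fst (0, v)) (\<lambda>i. snd (0, v) $ i) > 0"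
      using assms by (simp add: shifted_eval_0 orthant_pos_def)
  qed
  then obtain t0 where t0: "t0 > 0"
    and small: "\<And>t v. \<bar>t\<bar> < t0 \<Longrightarrow> v \<in> K \<Longrightarrow> shifted_eval f t (\<lambda>i. v $ i) > 0"
    by auto
  have "shifted_eval f t z > 0" if "\<bar>t\<bar> < t0" "\<forall>i. 0 \<le> z i" "(\<Sum>i\<in>UNIV. z i) = 1" for t z
    using small[of t "\<chi> i. z i"] that by (simp add: K_def)
  with t0 show ?thesis by blast
qed

text \<open>The coefficient of $x^v$ in $(x_1 + \dots + x_n)^N f$ is $N!/v! \cdot M^e f_{1/M}(v/M)$ with
  $M = |v|$, where $f_t$ (\<open>shifted_eval f t\<close>) replaces each power $z_i^k$ in $f$ by
  $z_i(z_i - t)\cdots(z_i - (k-1)t)$; and $f_t > 0$ on the simplex for small $t$ because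
  $f_0 = f > 0$ there.\<close>

theorem polya:
  fixes f :: "'n::finite rpoly"
  assumes f: "is_form f e" and pos: "orthant_pos f"
  shows "\<exists>N0. \<forall>N\<ge>N0. pos_form (sum_vars ^ N * f) (N + e)"
proof -
  obtain t0 where t0: "t0 > 0" and small: "\<And>t z. \<bar>t\<bar> < t0 \<Longrightarrow> \<forall>i. 0 \<le> z i \<Longrightarrow>
      (\<Sum>i\<in>UNIV. z i) = 1 \<Longrightarrow> shifted_eval f t z > 0"
    using shifted_eval_pos_near_0[OF pos] by blast
  have "pos_form (sum_vars ^ N * f) (N + e)" if N: "N \<ge> nat \<lceil>1 / t0\<rceil> + 1" for N
  proof -
    define M where "M = N + e"
    have "real M > 1 / t0" using N unfolding M_def by linarith
    then have M: "M > 0" "1 / real M < t0"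
      using N t0 by (auto simp: M_def divide_less_eq field_simps)
    have "lookup (sum_vars ^ N * f) v > 0" if v: "mdeg v = N + e" for v
    proof -
      have "(\<Sum>i\<in>UNIV. real (lookup v i)) = real M"
        using v unfolding mdeg_def M_def by (simp flip: of_nat_sum)
      then have "shifted_eval f (1 / real M) (\<lambda>i. real (lookup v i) / real M) > 0"
        using M by (intro small) (simp_all flip: sum_divide_distrib)
      moreover have "lookup (sum_vars ^ N * f) v * (\<Prod>i\<in>UNIV. fact (lookup v i))
        = fact N * (real M ^ e * shifted_eval f (1 / real M) (\<lambda>i. real (lookup v i) / real M))"
        using lookup_sum_vars_power_mult[OF f v] falling_eval_eq_shifted_eval[OF f _ M(1), of v] v
        by (simp add: M_def)
      moreover have "(\<Prod>i\<in>UNIV. fact (lookup v i) :: real) > 0" by (intro prod_pos) simp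
      ultimately show ?thesis using M(1) by (metis zero_less_mult_pos2 fact_gt_zero of_nat_0_less_iff zero_less_power mult_pos_pos)
    qed
    moreover have "is_form (sum_vars ^ N * f) (N + e)"
      using is_form_mult[OF nonneg_form_imp_is_form[OF nonneg_form_sum_vars_power] f] .
    ultimately show ?thesis unfolding pos_form_def by blast
  qed
  then show ?thesis by blast
qed

section \<open>Powers of a form with positive coefficients\<close>

lemma const_power: "const a ^ k = (const (a ^ k) :: 'n rpoly)"
  by (induction k) (simp_all add: mult_single)

lemma of_nat_eq_const: "(of_nat n :: 'n rpoly) = const (real n)"
  by simp

lemma is_form_of_nat_mult: "is_form g a \<Longrightarrow> is_form (of_nat n * g) a"
  by (simp only: of_nat_eq_const is_form_const_mult)

lemma nonneg_form_of_nat_mult: "nonneg_form g a \<Longrightarrow> nonneg_form (of_nat n * g) a"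
  by (simp only: of_nat_eq_const nonneg_form_const_mult of_nat_0_le_iff)

lemma lookup_of_nat_mult: "lookup (of_nat n * g) v = real n * lookup (g :: 'n rpoly) v"
  by (simp only: of_nat_eq_const lookup_const_mult)

lemma is_form_power_mult_degree:
  "is_form R D \<Longrightarrow> is_form g (D * k + e) \<Longrightarrow> k \<le> N \<Longrightarrow> is_form (R ^ (N - k) * g) (D * N + e)"
  using is_form_mult[OF is_form_power[of R D "N - k"], of g "D * k + e"]
  by (simp add: diff_mult_distrib2 mult.commute)

lemma nonneg_form_power_mult_degree:
  "nonneg_form R D \<Longrightarrow> nonneg_form g (D * k + e) \<Longrightarrow> k \<le> N \<Longrightarrow> nonneg_form (R ^ (N - k) * g) (D * N + e)"
  using nonneg_form_mult[OF nonneg_form_power[of R D "N - k"], of g "D * k + e"]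
  by (simp add: diff_mult_distrib2 mult.commute)

lemma bounded_coeffs:
  fixes h :: "nat \<Rightarrow> 'a \<Rightarrow>\<^sub>0 real"
  shows "\<exists>H\<ge>0. \<forall>k<n. \<forall>v. \<bar>lookup (h k) v\<bar> \<le> H"
proof -
  define H where "H = (\<Sum>k<n. \<Sum>w\<in>keys (h k). \<bar>lookup (h k) w\<bar>)"
  have H: "H \<ge> 0" unfolding H_def by (intro sum_nonneg) auto
  have "\<bar>lookup (h k) v\<bar> \<le> H" if k: "k < n" for k v
  proof (cases "v \<in> keys (h k)")
    case True
    have "\<bar>lookup (h k) v\<bar> \<le> (\<Sum>w\<in>keys (h k). \<bar>lookup (h k) w\<bar>)"
      using True by (intro member_le_sum) auto
    also have "\<dots> \<le> H" unfolding H_def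
      by (rule member_le_sum[where f = "\<lambda>k. \<Sum>w\<in>keys (h k). \<bar>lookup (h k) w\<bar>"])
        (use k in \<open>auto intro: sum_nonneg\<close>)
    finally show ?thesis .
  next
    case False
    then show ?thesis using H by (simp add: in_keys_iff)
  qed
  with H show ?thesis by blast
qed

lemma pos_form_minus_const_mult:
  assumes P: "pos_form P D" and S: "nonneg_form S D"
  shows "\<exists>c>0. nonneg_form (P - const c * S) D"
proof -
  obtain \<beta> where \<beta>: "\<beta> > 0" "\<And>v. mdeg v = D \<Longrightarrow> lookup P v \<ge> \<beta>"
    using pos_form_coeff_lower_bound[OF P] by blast
  obtain H where H: "H \<ge> 0" "\<And>v. \<bar>lookup S v\<bar> \<le> H" using bounded_coeffs[of 1 "\<lambda>_. S"] by auto
  define c where "c = \<beta> / (H + 1)"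
  have c: "c > 0" unfolding c_def using \<beta> H by simp
  have "lookup (P - const c * S) v \<ge> 0" for v
  proof (cases "mdeg v = D")
    case True
    have "c * lookup S v \<le> c * (H + 1)" using H(2)[of v] c by (intro mult_left_mono) auto
    also have "\<dots> = \<beta>" unfolding c_def using H by simp
    finally show ?thesis using \<beta>(2)[OF True] by (simp add: lookup_minus lookup_const_mult)
  next
    case False
    then have "lookup P v = 0" "lookup S v = 0"
      using P S unfolding pos_form_def nonneg_form_def by (auto intro: is_form_lookup)
    then show ?thesis by (simp add: lookup_minus lookup_const_mult)
  qed
  moreover have "is_form (P - const c * S) D"
    using P S unfolding pos_form_def nonneg_form_def is_form_iff by (simp add: lookup_minus lookup_const_mult)
  ultimately show ?thesis using c unfolding nonneg_form_def by blast
qed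

lemma binomial_sum_below_dominated:
  fixes \<beta> H :: real
  assumes "\<beta> > 0" "H \<ge> 0"
  shows "\<exists>N1. \<forall>N\<ge>N1. H * (\<Sum>k<i. real (N choose k)) \<le> \<beta> * real (N choose i)"
proof (cases i)
  case 0
  then show ?thesis using assms(1) by auto
next
  case (Suc j)
  define N1 where "N1 = max i (nat \<lceil>H * real i ^ Suc i / \<beta>\<rceil>) + 1"
  have "H * (\<Sum>k<i. real (N choose k)) \<le> \<beta> * real (N choose i)" if N: "N \<ge> N1" for N
  proof -
    have N_ge: "N \<ge> 1" "N \<ge> i" using N unfolding N1_def by auto
    have i_pos: "real i > 0" using Suc by simp
    have "real N \<ge> H * real i ^ Suc i / \<beta>" using N unfolding N1_def by linarith
    then have N_big: "\<beta> * real N \<ge> H * real i ^ Suc i" using assms(1) by (simp add: field_simps)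
    have "(\<Sum>k<i. real (N choose k)) \<le> (\<Sum>k<i. real N ^ j)"
    proof (rule sum_mono)
      fix k assume k: "k \<in> {..<i}"
      have "real (N choose k) \<le> real N ^ k"
        using binomial_le_pow[of k N] k N_ge by (metis lessThan_iff less_imp_le_nat order_trans of_nat_le_iff of_nat_power)
      also have "\<dots> \<le> real N ^ j" using k N_ge Suc by (intro power_increasing) auto
      finally show "real (N choose k) \<le> real N ^ j" .
    qed
    then have "H * (\<Sum>k<i. real (N choose k)) \<le> H * (real i * real N ^ j)"
      using assms(2) by (intro mult_left_mono) auto
    also have "\<dots> = (H * real i ^ Suc i) * real N ^ j / real i ^ i"
      using i_pos by (simp add: field_simps)
    also have "\<dots> \<le> (\<beta> * real N) * real N ^ j / real i ^ i"
      using N_big by (intro divide_right_mono mult_right_mono) auto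
    also have "\<dots> = \<beta> * (real N / real i) ^ i"
      using Suc by (simp add: power_divide field_simps)
    also have "\<dots> \<le> \<beta> * real (N choose i)"
      using binomial_ge_n_over_k_pow_k[of i N] N_ge assms(1) by (intro mult_left_mono) auto
    finally show ?thesis .
  qed
  then show ?thesis by blast
qed

lemma eventually_nonneg_binomial_combination:
  fixes h :: "nat \<Rightarrow> 'n::finite rpoly"
  assumes forms: "\<And>k. k < i \<Longrightarrow> is_form (h k) a" and top: "pos_form (h i) a"
  shows "\<exists>N1. \<forall>N\<ge>N1. nonneg_form (\<Sum>k\<le>i. of_nat (N choose k) * h k) a"
proof -
  obtain \<beta> where \<beta>: "\<beta> > 0" "\<And>v. mdeg v = a \<Longrightarrow> lookup (h i) v \<ge> \<beta>"
    using pos_form_coeff_lower_bound[OF top] by blast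
  obtain H where H: "H \<ge> 0" "\<And>k v. k < i \<Longrightarrow> \<bar>lookup (h k) v\<bar> \<le> H"
    using bounded_coeffs[of i h] by blast
  obtain N1 where N1: "\<And>N. N \<ge> N1 \<Longrightarrow> H * (\<Sum>k<i. real (N choose k)) \<le> \<beta> * real (N choose i)"
    using binomial_sum_below_dominated[OF \<beta>(1) H(1)] by blast
  have "nonneg_form (\<Sum>k\<le>i. of_nat (N choose k) * h k) a" if N: "N \<ge> N1" for N
  proof -
    have form: "is_form (\<Sum>k\<le>i. of_nat (N choose k) * h k) a"
      using forms top unfolding pos_form_def
      by (intro is_form_sum is_form_of_nat_mult) (auto simp: le_less)
    have "lookup (\<Sum>k\<le>i. of_nat (N choose k) * h k) v \<ge> 0" for v
    proof (cases "mdeg v = a")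
      case False
      then show ?thesis using form is_form_lookup by (metis order_refl)
    next
      case True
      have "- (\<Sum>k<i. real (N choose k) * H) \<le> (\<Sum>k<i. real (N choose k) * lookup (h k) v)"
        unfolding sum_negf[symmetric]
      proof (rule sum_mono)
        fix k assume "k \<in> {..<i}"
        then have "- H \<le> lookup (h k) v" using H(2)[of k v] by auto
        then show "- (real (N choose k) * H) \<le> real (N choose k) * lookup (h k) v"
          by (metis mult_left_mono mult_minus_right of_nat_0_le_iff)
      qed
      moreover have "\<beta> * real (N choose i) \<le> real (N choose i) * lookup (h i) v"
        using mult_right_mono[OF \<beta>(2)[OF True], of "real (N choose i)"] by (simp add: mult.commute)
      moreover have "(\<Sum>k<i. real (N choose k) * H) = H * (\<Sum>k<i. real (N choose k))"
        by (simp add: sum_distrib_left mult.commute)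
      moreover have "lookup (\<Sum>k\<le>i. of_nat (N choose k) * h k) v
          = (\<Sum>k<i. real (N choose k) * lookup (h k) v) + real (N choose i) * lookup (h i) v"
        by (simp add: lookup_add lookup_sum lookup_of_nat_mult lessThan_Suc_atMost[symmetric])
      ultimately show ?thesis using N1[OF N] by linarith
    qed
    with form show ?thesis unfolding nonneg_form_def by blast
  qed
  then show ?thesis by blast
qed

lemma binomial_ring_split:
  fixes S R f :: "'a::comm_semiring_1"
  assumes "i \<le> N"
  shows "(S + R) ^ N * f =
    R ^ (N - i) * (\<Sum>k\<le>i. of_nat (N choose k) * (R ^ (i - k) * (S ^ k * f)))
    + (\<Sum>k\<in>{i<..N}. of_nat (N choose k) * (R ^ (N - k) * (S ^ k * f)))"
proof -
  let ?t = "\<lambda>k. of_nat (N choose k) * (R ^ (N - k) * (S ^ k * f))"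
  have "(S + R) ^ N * f = (\<Sum>k\<le>N. ?t k)"
    by (simp add: binomial_ring sum_distrib_left sum_distrib_right mult_ac)
  also have "{..N} = {..i} \<union> {i<..N}" using assms by auto
  also have "(\<Sum>k\<in>{..i} \<union> {i<..N}. ?t k) = (\<Sum>k\<le>i. ?t k) + (\<Sum>k\<in>{i<..N}. ?t k)"
    by (rule sum.union_disjoint) auto
  also have "(\<Sum>k\<le>i. ?t k) = R ^ (N - i) * (\<Sum>k\<le>i. of_nat (N choose k) * (R ^ (i - k) * (S ^ k * f)))"
    unfolding sum_distrib_left
  proof (intro sum.cong refl)
    fix k assume "k \<in> {..i}"
    then have "N - k = (N - i) + (i - k)" using assms by simp
    then show "?t k = R ^ (N - i) * (of_nat (N choose k) * (R ^ (i - k) * (S ^ k * f)))"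
      by (simp only: power_add mult_ac)
  qed
  finally show ?thesis .
qed

lemma eventually_pos_form_binomial_power_mult:
  fixes S R f :: "'n::finite rpoly"
  assumes S: "is_form S D" and R: "nonneg_form R D" and f: "is_form f e"
    and S_pos: "\<And>k. k \<ge> N0 \<Longrightarrow> pos_form (S ^ k * f) (D * k + e)"
  shows "\<exists>N1. \<forall>N\<ge>N1. pos_form ((S + R) ^ N * f) (D * N + e)"
proof -
  have S_form: "is_form (S ^ k * f) (D * k + e)" for k
    using is_form_mult[OF is_form_power[OF S, of k] f] by (simp add: mult.commute)
  obtain N1 where head: "\<And>N. N \<ge> N1 \<Longrightarrow>
      nonneg_form (\<Sum>k\<le>N0. of_nat (N choose k) * (R ^ (N0 - k) * (S ^ k * f))) (D * N0 + e)"
    using eventually_nonneg_binomial_combination[of N0 "\<lambda>k. R ^ (N0 - k) * (S ^ k * f)"]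
      is_form_power_mult_degree[OF nonneg_form_imp_is_form[OF R] S_form] S_pos[of N0]
    by fastforce
  have "pos_form ((S + R) ^ N * f) (D * N + e)" if N: "N \<ge> max N1 (Suc N0)" for N
  proof -
    have "nonneg_form (R ^ (N - N0) * (\<Sum>k\<le>N0. of_nat (N choose k) * (R ^ (N0 - k) * (S ^ k * f)))) (D * N + e)"
      using N by (intro nonneg_form_power_mult_degree[OF R head]) auto
    moreover have "pos_form (\<Sum>k\<in>{N0<..N}. of_nat (N choose k) * (R ^ (N - k) * (S ^ k * f))) (D * N + e)"
    proof (rule pos_form_sum[where j = N])
      show "pos_form (of_nat (N choose N) * (R ^ (N - N) * (S ^ N * f))) (D * N + e)"
        using N S_pos[of N] by simp
      fix k assume "k \<in> {N0<..N}"
      then show "nonneg_form (of_nat (N choose k) * (R ^ (N - k) * (S ^ k * f))) (D * N + e)"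
        by (intro nonneg_form_of_nat_mult nonneg_form_power_mult_degree[OF R]
            pos_form_imp_nonneg_form S_pos) auto
    qed (use N in auto)
    ultimately show ?thesis
      using binomial_ring_split[of N0 N S R f] N by (simp add: add.commute pos_form_add)
  qed
  then show ?thesis by blast
qed

lemma eventually_pos_form_power_mult:
  fixes P f :: "'n::finite rpoly"
  assumes P: "pos_form P D" and D: "D \<ge> 1" and f: "is_form f e" and pos: "orthant_pos f"
  shows "\<exists>N1. \<forall>N\<ge>N1. pos_form (P ^ N * f) (D * N + e)"
proof -
  obtain N0 where N0: "\<And>n. n \<ge> N0 \<Longrightarrow> pos_form (sum_vars ^ n * f) (n + e)"
    using polya[OF f pos] by blast
  obtain c where c: "c > 0" "nonneg_form (P - const c * sum_vars ^ D) D"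
    using pos_form_minus_const_mult[OF P nonneg_form_sum_vars_power] by auto
  define S :: "'n rpoly" where "S = const c * sum_vars ^ D"
  have S: "is_form S D"
    unfolding S_def by (intro is_form_const_mult nonneg_form_imp_is_form nonneg_form_sum_vars_power)
  have R: "nonneg_form (P - S) D" using c(2) unfolding S_def .
  have S_pos: "pos_form (S ^ k * f) (D * k + e)" if "k \<ge> N0" for k
  proof -
    have "S ^ k * f = const (c ^ k) * (sum_vars ^ (D * k) * f)"
      by (simp add: S_def power_mult_distrib const_power power_mult mult.assoc)
    moreover have "D * k \<ge> N0" using that D by (metis le_trans mult_le_mono1 mult_1)
    ultimately show ?thesis using N0 c(1) by (simp add: pos_form_const_mult)
  qed
  show ?thesis using eventually_pos_form_binomial_power_mult[OF S R f S_pos] by simp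
qed

section \<open>Positivity on the orthant\<close>

lemma orthant_pos_mult: "orthant_pos f \<Longrightarrow> orthant_pos g \<Longrightarrow> orthant_pos (f * g)"
  by (simp add: orthant_pos_def peval_mult)

lemma orthant_pos_power: "orthant_pos f \<Longrightarrow> orthant_pos (f ^ m)"
  by (simp add: orthant_pos_def peval_power)

lemma orthant_pos_one: "orthant_pos 1"
  by (simp add: orthant_pos_def peval_def)

lemma orthant_pos_if_pos_form: "pos_form f a \<Longrightarrow> orthant_pos f"
  unfolding orthant_pos_def using peval_pos_form_pos by blast

lemma orthant_pos_if_odd_power:
  assumes "odd m" "orthant_pos (p ^ m)" shows "orthant_pos p"
  using assms unfolding orthant_pos_def by (auto simp: peval_power zero_less_power_eq)

lemma segment_in_orthant_nonzero:
  assumes "x \<in> orthant" "y \<in> orthant" "x \<noteq> (\<lambda>_. 0)" "y \<noteq> (\<lambda>_. 0)" "0 \<le> t" "t \<le> 1"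
  shows "(\<lambda>i. (1 - t) * x i + t * y i) \<in> orthant - {\<lambda>_. 0}"
proof -
  have nonneg: "(1 - t) * x i \<ge> 0" "t * y i \<ge> 0" for i
    using assms unfolding orthant_def by auto
  obtain i where "x i \<noteq> 0" using assms(3) by (meson ext)
  moreover obtain j where "y j \<noteq> 0" using assms(4) by (meson ext)
  ultimately have "(1 - t) * x i + t * y i \<noteq> 0 \<or> (1 - t) * x j + t * y j \<noteq> 0"
    using nonneg[of i] nonneg[of j] by (cases "t = 1") (auto simp: add_nonneg_eq_0_iff)
  then show ?thesis using nonneg unfolding orthant_def by (auto simp: fun_eq_iff)
qed

lemma orthant_pos_if_point:
  assumes p: "is_form p d" "d \<ge> 1" and pm: "orthant_pos (p ^ m)" "m \<ge> 1"
    and x: "x \<in> orthant" "peval p x > 0"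
  shows "orthant_pos p"
  unfolding orthant_pos_def
proof (rule ballI, rule ccontr)
  fix y assume y: "y \<in> orthant - {\<lambda>_. 0}" and "\<not> peval p y > 0"
  define g where "g t = peval p (\<lambda>i. (1 - t) * x i + t * y i)" for t
  have "g 0 > 0" "g 1 \<le> 0" using x \<open>\<not> peval p y > 0\<close> by (simp_all add: g_def)
  moreover have "\<forall>t. 0 \<le> t \<and> t \<le> 1 \<longrightarrow> isCont g t"
    unfolding g_def peval_def by (intro allI impI continuous_intros)
  ultimately obtain t where t: "0 \<le> t" "t \<le> 1" "g t = 0" using IVT2[of g 1 0 0] by auto
  have "x \<noteq> (\<lambda>_. 0)" using x(2) peval_at_zero[OF p] by auto
  then have "(\<lambda>i. (1 - t) * x i + t * y i) \<in> orthant - {\<lambda>_. 0}"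
    using segment_in_orthant_nonzero[OF x(1)] y t by auto
  then have "peval (p ^ m) (\<lambda>i. (1 - t) * x i + t * y i) > 0" using pm(1) by (simp add: orthant_pos_def)
  then show False using t(3) pm(2) by (simp add: g_def peval_power power_0_left)
qed

lemma eventually_strictly_pos_coeffs_power_mult:
  fixes p q :: "'n::finite rpoly"
  assumes p: "is_form p d" "d \<ge> 1" "orthant_pos p" and m: "m \<ge> 1" "strictly_pos_coeffs (p ^ m)"
    and q: "is_form q e" "orthant_pos q"
  shows "\<exists>k0. \<forall>k\<ge>k0. strictly_pos_coeffs (p ^ k * q)"
proof -
  have pm: "pos_form (p ^ m) (d * m)"
    using m(2) pos_form_power_degree[OF p(1)] by (auto simp: strictly_pos_coeffs_iff)
  have "\<forall>r\<in>{..<m}. eventually (\<lambda>N. pos_form ((p ^ m) ^ N * (p ^ r * q)) (d * m * N + (d * r + e))) sequentially"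
  proof
    fix r
    have "is_form (p ^ r * q) (d * r + e)" by (intro is_form_mult is_form_power p(1) q(1))
    moreover have "orthant_pos (p ^ r * q)" by (intro orthant_pos_mult orthant_pos_power p(3) q(2))
    moreover have "d * m \<ge> 1" using p(2) m(1) by simp
    ultimately show "eventually (\<lambda>N. pos_form ((p ^ m) ^ N * (p ^ r * q)) (d * m * N + (d * r + e))) sequentially"
      using eventually_pos_form_power_mult[OF pm] unfolding eventually_sequentially by blast
  qed
  then have "eventually (\<lambda>N. \<forall>r\<in>{..<m}. pos_form ((p ^ m) ^ N * (p ^ r * q)) (d * m * N + (d * r + e))) sequentially"
    by (rule eventually_ball_finite[rotated]) simp
  then obtain N1 where N1: "\<And>N r. N \<ge> N1 \<Longrightarrow> r < m \<Longrightarrow> pos_form ((p ^ m) ^ N * (p ^ r * q)) (d * m * N + (d * r + e))"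
    unfolding eventually_sequentially by blast
  have "strictly_pos_coeffs (p ^ k * q)" if k: "k \<ge> m * N1" for k
  proof -
    have "k div m \<ge> N1" using k m(1) by (metis div_le_mono nonzero_mult_div_cancel_left not_one_le_zero)
    moreover have "p ^ k * q = (p ^ m) ^ (k div m) * (p ^ (k mod m) * q)"
      by (metis (no_types) div_mult_mod_eq mult.assoc mult.commute power_add power_mult)
    ultimately show ?thesis using N1[of "k div m" "k mod m"] m(1) by (auto simp: strictly_pos_coeffs_iff)
  qed
  then show ?thesis by blast
qed

lemma odd_power_strictly_pos_coeffs_iff:
  fixes p :: "'n::finite rpoly"
  assumes "is_form p d" "d \<ge> 1"
  shows "(\<exists>m. odd m \<and> strictly_pos_coeffs (p ^ m)) \<longleftrightarrow>
    orthant_pos p \<and> (\<exists>m\<ge>1. strictly_pos_coeffs (p ^ m))"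
proof
  assume "\<exists>m. odd m \<and> strictly_pos_coeffs (p ^ m)"
  then obtain m a where m: "odd m" "pos_form (p ^ m) a" by (auto simp: strictly_pos_coeffs_iff)
  then have "orthant_pos p" using orthant_pos_if_odd_power orthant_pos_if_pos_form by blast
  moreover have "m \<ge> 1" using odd_pos[OF m(1)] by simp
  ultimately show "orthant_pos p \<and> (\<exists>m\<ge>1. strictly_pos_coeffs (p ^ m))"
    using m(2) by (auto simp: strictly_pos_coeffs_iff)
next
  assume "orthant_pos p \<and> (\<exists>m\<ge>1. strictly_pos_coeffs (p ^ m))"
  then obtain k0 where k0: "\<And>k. k \<ge> k0 \<Longrightarrow> strictly_pos_coeffs (p ^ k * 1)"
    using eventually_strictly_pos_coeffs_power_mult[OF assms _ _ _ is_form_one orthant_pos_one] by blast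
  have "strictly_pos_coeffs (p ^ (2 * k0 + 1))" using k0[of "2 * k0 + 1"] by simp
  moreover have "odd (2 * k0 + 1)" by simp
  ultimately show "\<exists>m. odd m \<and> strictly_pos_coeffs (p ^ m)" by blast
qed

lemma orthant_pos_iff_exists_point:
  fixes p :: "'n::finite rpoly"
  assumes "is_form p d" "d \<ge> 1" "m \<ge> 1" "strictly_pos_coeffs (p ^ m)"
  shows "orthant_pos p \<longleftrightarrow> (\<exists>x\<in>orthant. peval p x > 0)"
proof
  assume "orthant_pos p"
  moreover have "(\<lambda>_. 1) \<in> orthant - {\<lambda>_. 0}" by (auto simp: orthant_def fun_eq_iff)
  ultimately show "\<exists>x\<in>orthant. peval p x > 0" unfolding orthant_pos_def by blast
next
  assume "\<exists>x\<in>orthant. peval p x > 0"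
  moreover have "orthant_pos (p ^ m)"
    using assms(4) orthant_pos_if_pos_form by (auto simp: strictly_pos_coeffs_iff)
  ultimately show "orthant_pos p" using orthant_pos_if_point[OF assms(1,2) _ assms(3)] by blast
qed

theorem theorem1p1:
  fixes p :: "'n::finite rpoly"
  assumes form: "is_form p d" and nonconst: "d \<ge> 1" and nz: "p \<noteq> 0"
  shows "((\<exists>m::nat. odd m \<and> strictly_pos_coeffs (p ^ m))
          \<longleftrightarrow> ((\<exists>m::nat. m \<ge> 1 \<and> strictly_pos_coeffs (p ^ m)) \<and>
               (\<exists>x\<in>orthant. peval p x > 0)))
       \<and> ((\<exists>m::nat. odd m \<and> strictly_pos_coeffs (p ^ m))
          \<longleftrightarrow> (\<forall>q :: 'n rpoly. (\<exists>e. is_form q e) \<and> (\<forall>x\<in>orthant - {\<lambda>_. 0}. peval q x > 0) \<longrightarrow>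
                 (\<exists>m0::nat. m0 \<ge> 1 \<and> (\<forall>m\<ge>m0. strictly_pos_coeffs (p ^ m * q)))))"
    (is "(?A \<longleftrightarrow> ?B) \<and> (?A \<longleftrightarrow> ?C)")
proof -
  note A_iff = odd_power_strictly_pos_coeffs_iff[OF form nonconst]
  have "?A \<longleftrightarrow> ?B" unfolding A_iff using orthant_pos_iff_exists_point[OF form nonconst] by blast
  moreover have "?A \<longleftrightarrow> ?C"
  proof
    assume ?A
    then obtain m where m: "orthant_pos p" "m \<ge> 1" "strictly_pos_coeffs (p ^ m)" using A_iff by blast
    show ?C
    proof (intro allI impI)
      fix q :: "'n rpoly"
      assume "(\<exists>e. is_form q e) \<and> (\<forall>x\<in>orthant - {\<lambda>_. 0}. peval q x > 0)"
      then obtain e where "is_form q e" "orthant_pos q" unfolding orthant_pos_def by blast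
      then obtain k0 where "\<forall>k\<ge>k0. strictly_pos_coeffs (p ^ k * q)"
        using eventually_strictly_pos_coeffs_power_mult[OF form nonconst m] by blast
      then show "\<exists>m0\<ge>1. \<forall>m\<ge>m0. strictly_pos_coeffs (p ^ m * q)"
        by (intro exI[of _ "max 1 k0"]) auto
    qed
  next
    assume ?C
    then obtain m0 where "\<forall>m\<ge>m0. strictly_pos_coeffs (p ^ m * 1)"
      using is_form_one orthant_pos_one unfolding orthant_pos_def by blast
    moreover have "m0 \<le> 2 * m0 + 1" by simp
    ultimately have "strictly_pos_coeffs (p ^ (2 * m0 + 1))" by (simp only: mult_1_right)
    moreover have "odd (2 * m0 + 1)" by simp
    ultimately show ?A by blast
  qed
  ultimately show ?thesis by blast
qed

end
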